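(* Assume $m$ satisfies (H1) (for some $n\in\mathbb{N}^\star$), (H2a) and (Osg). Let $\omega_0\in L^1\cap L^\infty(\mathbb{R}^2)$ and let $(u,\omega)$ be the global weak solution of $\partial_t\omega+u\cdot\nabla\omega=0$, $u=\nabla^\perp(-\Delta)^{-1}m(\Lambda)\omega$, $\omega|_{t=0}=\omega_0$, with flow map $\Phi_{t,s}$. If $u\in L^1([0,+\infty);C^1_{\mathrm m}(\mathbb{R}^2))$, then for all $t,s\in\mathbb{R}_+$ and $x\ne y$, $$|\Phi_{t,s}(x)-\Phi_{t,s}(y)|^{-1}\ge\widetilde{\mathsf H}^{-1}\Big(\widetilde{\mathsf H}(|x-y|^{-1})-\Big|\int_s^t\|u(\tau)\|_{C^1_{\mathrm m}}\,\mathrm d\tau\Big|\Big),$$ and $$|\Phi_{t,s}(x)-\Phi_{t,s}(y)|\le|x-y|\exp\Big(\big(m(|x-y|^{-1})+1\big)\Big|\int_s^t\|u(\tau)\|_{C^1_{\mathrm m}}\,\mathrm d\tau\Big|\Big).$$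
   Context: $\nabla^\perp=(\partial_{x_2},-\partial_{x_1})$, $\Lambda=(-\Delta)^{1/2}$, $m(\Lambda)$ the Fourier multiplier with radial symbol $m(|\xi|)$, $m:(0,\infty)\to\mathbb{R}$. (H1) with index $n$: $m\in C^{n+4}(\mathbb{R}_+)$; $m>0$, $m'\ge0$ on $(0,\infty)$; $\lim_{r\to0^+}rm'(r)$ exists; $|\frac{\mathrm d^k}{\mathrm dr^k}m'(r)|\le Cr^{-k}m'(r)$ for $k=1,\dots,n+3$, $r>0$. (H2a): with $\widetilde m(r)=m(e^r)$, there exist $\beta\in[0,+\infty]$, $\beta_1\in[0,\infty)$, $\beta_2\in(-2,\infty)$ with $\lim_{r\to\infty}m(r)=\infty$, $\lim\frac{r(\log r)\widetilde m'(r)}{\widetilde m(r)}=\beta$, $\lim\frac{r\widetilde m'(r)}{\widetilde m(r)}=\beta_1$, $\lim\frac{r\widetilde m''(r)}{\widetilde m'(r)}=\beta_2$ (as $r\to\infty$). (Osg): $\int_2^\infty\frac{\mathrm dr}{r(\log r)m(r)}=+\infty$. Flow map: $\frac{\mathrm d}{\mathrm dt}\Phi_{t,s}(x)=u(\Phi_{t,s}(x),t)$, $\Phi_{s,s}=\mathrm{id}$. $\|f\|_{C^1_{\mathrm m}}=\|f\|_{L^\infty(\mathbb{R}^2)}+\sup_{|x-y|>0}\frac{|f(x)-f(y)|}{|x-y|(m(|x-y|^{-1})+1)}$. $\widetilde{\mathsf H}(r)=\int_{1/r}^1\frac{\mathrm d\rho}{\rho(m(\rho^{-1})+1)}$ for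 $r>0$; it is increasing, and $\widetilde{\mathsf H}^{-1}:\mathbb{R}\to(0,\infty)$ denotes its inverse. *)

theory Defs
  imports "HOL-Analysis.Analysis"
begin

type_synonym pt = "real ^ 2"

definition Ck_on :: "nat \<Rightarrow> real set \<Rightarrow> (real \<Rightarrow> real) \<Rightarrow> bool" where
  "Ck_on k S f \<longleftrightarrow>
     (\<forall>j<k. \<forall>r\<in>S. ((deriv ^^ j) f) differentiable (at r)) \<and>
     continuous_on S ((deriv ^^ k) f)"

definition H1 :: "nat \<Rightarrow> (real \<Rightarrow> real) \<Rightarrow> bool" where
  "H1 n m \<longleftrightarrow>
     Ck_on (n + 4) {0<..} m \<and>
     (\<forall>r>0. m r > 0 \<and> deriv m r \<ge> 0) \<and>
     (\<exists>L. ((\<lambda>r. r * deriv m r) \<longlongrightarrow> L) (at_right 0)) \<and>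
     (\<exists>C. \<forall>k\<in>{1..n+3}. \<forall>r>0.
        \<bar>(deriv ^^ k) (deriv m) r\<bar> \<le> C * r powi (- int k) * deriv m r)"

definition H2a :: "(real \<Rightarrow> real) \<Rightarrow> bool" where
  "H2a m \<longleftrightarrow>
     (let mt = (\<lambda>r. m (exp r)) in
      \<exists>(\<beta>::ereal) (\<beta>1::real) (\<beta>2::real). \<beta> \<ge> 0 \<and> \<beta>1 \<ge> 0 \<and> \<beta>2 > -2 \<and>
        filterlim m at_top at_top \<and>
        ((\<lambda>r. ereal (r * ln r * deriv mt r / mt r)) \<longlongrightarrow> \<beta>) at_top \<and>
        ((\<lambda>r. r * deriv mt r / mt r) \<longlongrightarrow> \<beta>1) at_top \<and>
        ((\<lambda>r. r * deriv (deriv mt) r / deriv mt r) \<longlongrightarrow> \<beta>2) at_top)"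

definition Osg :: "(real \<Rightarrow> real) \<Rightarrow> bool" where
  "Osg m \<longleftrightarrow>
     (\<integral>\<^sup>+ r. indicator {2..} r * ennreal (1 / (r * ln r * m r)) \<partial>lborel) = \<infinity>"

definition Cm_space :: "(real \<Rightarrow> real) \<Rightarrow> (pt \<Rightarrow> pt) \<Rightarrow> bool" where
  "Cm_space m f \<longleftrightarrow> bounded (range f) \<and>
     bdd_above {norm (f x - f y) / (dist x y * (m (inverse (dist x y)) + 1)) | x y. x \<noteq> y}"

definition Cm_norm :: "(real \<Rightarrow> real) \<Rightarrow> (pt \<Rightarrow> pt) \<Rightarrow> real" where
  "Cm_norm m f = (SUP x. norm (f x)) +
     Sup {norm (f x - f y) / (dist x y * (m (inverse (dist x y)) + 1)) | x y. x \<noteq> y}"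

definition Ht :: "(real \<Rightarrow> real) \<Rightarrow> real \<Rightarrow> real" where
  "Ht m r = (LBINT \<rho>=inverse r..1. 1 / (\<rho> * (m (inverse \<rho>) + 1)))"

definition Ht_inv :: "(real \<Rightarrow> real) \<Rightarrow> real \<Rightarrow> real" where
  "Ht_inv m y = (THE r. r > 0 \<and> Ht m r = y)"

end

(* Let d(tau) be the distance between the trajectories through x and y and W(tau) the time
   integral of the C^1_m norm of u. The C^1_m bound on u gives
     |d(tau2) - d(tau1)| <= int_tau1^tau2 |u(sigma)|_{C^1_m} omega(d(sigma)) dsigma,
   omega(r) = r (m(1/r) + 1), so the primitive F(r) = int_r^1 drho / omega(rho) = H~(1/r),
   which has F' = -1/omega, satisfies |F(d(t)) - F(d(s))| <= |W(t) - W(s)| as long as d stays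
   positive. As d is merely continuous, this is shown on short time intervals, where omega o d
   is almost constant, and then chained. Osgood's condition makes F blow up at 0, so F o d
   would blow up at the first zero of d; hence d never vanishes. The first inequality is the
   bound read through the inverse of H~. For the second, omega(r) <= r (m(1/|x-y|) + 1) for
   r >= |x-y| because m is nondecreasing, whence F(|x-y|) - F(r) >= ln(r/|x-y|) / (m(1/|x-y|) + 1). *)

theory Submission
  imports Defs
begin

section \<open>Osgood comparison for a controlled distance\<close>

lemma abs_diff_le_of_derivative_bound:
  fixes F \<omega> :: "real \<Rightarrow> real"
  assumes F: "\<And>r. r \<in> closed_segment r1 r2 \<Longrightarrow> (F has_real_derivative -(1 / \<omega> r)) (at r)"
    and L: "L > 0" "\<And>r. r \<in> closed_segment r1 r2 \<Longrightarrow> L \<le> \<omega> r"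
  shows "\<bar>F r2 - F r1\<bar> \<le> \<bar>r2 - r1\<bar> / L"
proof -
  have "norm (F r2 - F r1) \<le> (1 / L) * norm (r2 - r1)"
  proof (rule field_differentiable_bound[OF convex_closed_segment])
    fix r assume r: "r \<in> closed_segment r1 r2"
    show "(F has_field_derivative -(1 / \<omega> r)) (at r within closed_segment r1 r2)"
      using F[OF r] by (rule has_field_derivative_at_within)
    show "norm (-(1 / \<omega> r)) \<le> 1 / L"
      using L(1) L(2)[OF r] by (simp add: frac_le)
  qed auto
  then show ?thesis by simp
qed

lemma abs_diff_le_of_local_bound:
  fixes \<phi> \<psi> :: "real \<Rightarrow> real"
  assumes "p \<le> q" "\<delta> > 0"
    and local: "\<And>\<sigma>1 \<sigma>2. p \<le> \<sigma>1 \<Longrightarrow> \<sigma>1 \<le> \<sigma>2 \<Longrightarrow> \<sigma>2 \<le> q \<Longrightarrow> \<sigma>2 - \<sigma>1 < \<delta> \<Longrightarrow>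
        \<bar>\<phi> \<sigma>2 - \<phi> \<sigma>1\<bar> \<le> \<psi> \<sigma>2 - \<psi> \<sigma>1"
  shows "\<bar>\<phi> q - \<phi> p\<bar> \<le> \<psi> q - \<psi> p"
proof -
  define h where "h = \<delta> / 2"
  have h: "0 < h" "h < \<delta>"
    using \<open>\<delta> > 0\<close> by (auto simp: h_def)
  have reach: "\<bar>\<phi> \<tau> - \<phi> p\<bar> \<le> \<psi> \<tau> - \<psi> p" if "p \<le> \<tau>" "\<tau> \<le> q" "\<tau> \<le> p + real k * h" for k \<tau>
    using that
  proof (induction k arbitrary: \<tau>)
    case 0
    then show ?case by simp
  next
    case (Suc k)
    define \<tau>' where "\<tau>' = max p (\<tau> - h)"
    have \<tau>': "p \<le> \<tau>'" "\<tau>' \<le> \<tau>" "\<tau>' \<le> p + real k * h" "\<tau> - \<tau>' < \<delta>"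
      using Suc.prems h by (auto simp: \<tau>'_def distrib_right)
    have "\<bar>\<phi> \<tau>' - \<phi> p\<bar> \<le> \<psi> \<tau>' - \<psi> p"
      using Suc.IH \<tau>' Suc.prems by auto
    moreover have "\<bar>\<phi> \<tau> - \<phi> \<tau>'\<bar> \<le> \<psi> \<tau> - \<psi> \<tau>'"
      using local \<tau>' Suc.prems by auto
    ultimately show ?case by linarith
  qed
  obtain k :: nat where "q - p \<le> real k * h"
    using real_arch_simple[of "(q - p) / h"] h by (auto simp: field_simps)
  then show ?thesis
    using reach[of q k] \<open>p \<le> q\<close> by simp
qed

lemma islimpt_closed_segment_endpoint:
  fixes s z :: "'a::real_normed_vector"
  assumes "s \<noteq> z"
  shows "z islimpt closed_segment s z"
proof (rule connected_imp_perfect)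
  show "closed_segment s z \<noteq> {x}" for x
    using assms ends_in_segment(1)[of s z] ends_in_segment(1)[of z s]
    by (metis closed_segment_commute singletonD)
qed (simp_all add: connected_segment)

locale osgood_modulus =
  fixes \<omega> F :: "real \<Rightarrow> real"
  assumes \<omega>_pos: "\<And>r. r > 0 \<Longrightarrow> \<omega> r > 0"
    and \<omega>_cont: "continuous_on {0<..} \<omega>"
    and F_deriv: "\<And>r. r > 0 \<Longrightarrow> (F has_real_derivative -(1 / \<omega> r)) (at r)"

locale osgood_control = osgood_modulus \<omega> F for \<omega> F +
  fixes d W :: "real \<Rightarrow> real" and a b :: real
  assumes d_cont: "continuous_on {a..b} d"
    and d_nonneg: "\<And>\<tau>. \<tau> \<in> {a..b} \<Longrightarrow> d \<tau> \<ge> 0"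
    and W_mono: "mono_on {a..b} W"
    and d_increment: "\<And>\<sigma>1 \<sigma>2 M. a \<le> \<sigma>1 \<Longrightarrow> \<sigma>1 \<le> \<sigma>2 \<Longrightarrow> \<sigma>2 \<le> b \<Longrightarrow>
        (\<And>\<sigma>. \<sigma> \<in> {\<sigma>1..\<sigma>2} \<Longrightarrow> d \<sigma> > 0 \<and> \<omega> (d \<sigma>) \<le> M) \<Longrightarrow>
        \<bar>d \<sigma>2 - d \<sigma>1\<bar> \<le> M * (W \<sigma>2 - W \<sigma>1)"
begin

lemma osgood_increment_le_of_oscillation:
  assumes \<sigma>: "a \<le> \<sigma>1" "\<sigma>1 \<le> \<sigma>2" "\<sigma>2 \<le> b" and pos: "\<And>\<sigma>. \<sigma> \<in> {\<sigma>1..\<sigma>2} \<Longrightarrow> d \<sigma> > 0"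
    and near: "\<And>\<sigma>. \<sigma> \<in> {\<sigma>1..\<sigma>2} \<Longrightarrow> \<bar>\<omega> (d \<sigma>) - c\<bar> \<le> e" and "e < c"
  shows "\<bar>F (d \<sigma>2) - F (d \<sigma>1)\<bar> \<le> (c + e) / (c - e) * (W \<sigma>2 - W \<sigma>1)"
proof -
  have "closed_segment (d \<sigma>1) (d \<sigma>2) \<subseteq> d ` {\<sigma>1..\<sigma>2}"
  proof (rule closed_segment_subset)
    have "continuous_on {\<sigma>1..\<sigma>2} d"
      using continuous_on_subset[OF d_cont] \<sigma> by auto
    then show "convex (d ` {\<sigma>1..\<sigma>2})"
      using connected_continuous_image connected_convex_1 by blast
  qed (use \<sigma> in auto)
  then have range: "\<exists>\<sigma>\<in>{\<sigma>1..\<sigma>2}. r = d \<sigma>" if "r \<in> closed_segment (d \<sigma>1) (d \<sigma>2)" for r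
    using that by blast
  have "\<bar>F (d \<sigma>2) - F (d \<sigma>1)\<bar> \<le> \<bar>d \<sigma>2 - d \<sigma>1\<bar> / (c - e)"
  proof (rule abs_diff_le_of_derivative_bound[where \<omega> = \<omega>])
    fix r assume "r \<in> closed_segment (d \<sigma>1) (d \<sigma>2)"
    then obtain \<sigma> where "\<sigma> \<in> {\<sigma>1..\<sigma>2}" "r = d \<sigma>"
      using range by blast
    then show "(F has_real_derivative -(1 / \<omega> r)) (at r)" "c - e \<le> \<omega> r"
      using near[of \<sigma>] pos[of \<sigma>] by (auto intro: F_deriv)
  qed (use \<open>e < c\<close> in auto)
  also have "\<dots> \<le> (c + e) * (W \<sigma>2 - W \<sigma>1) / (c - e)"
    using near pos \<sigma> \<open>e < c\<close> by (intro divide_right_mono d_increment) force+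
  finally show ?thesis
    by simp
qed

lemma osgood_increment_le_mult:
  assumes pq: "a \<le> p" "p \<le> q" "q \<le> b" and pos: "\<And>\<sigma>. \<sigma> \<in> {p..q} \<Longrightarrow> d \<sigma> > 0"
    and K: "K > 1"
  shows "\<bar>F (d q) - F (d p)\<bar> \<le> K * (W q - W p)"
proof -
  have "continuous_on {p..q} (\<omega> \<circ> d)"
    using continuous_on_subset[OF d_cont] pq pos
    by (intro continuous_on_compose continuous_on_subset[OF \<omega>_cont]) auto
  note \<omega>d_cont = this[unfolded o_def]
  obtain \<sigma>0 where \<sigma>0: "\<sigma>0 \<in> {p..q}" "\<And>\<sigma>. \<sigma> \<in> {p..q} \<Longrightarrow> \<omega> (d \<sigma>0) \<le> \<omega> (d \<sigma>)"
    using continuous_attains_inf[OF compact_Icc _ \<omega>d_cont] pq by auto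
  define \<mu> where "\<mu> = \<omega> (d \<sigma>0)"
  have \<mu>: "\<mu> > 0"
    using \<omega>_pos pos \<sigma>0(1) by (simp add: \<mu>_def)
  (* chosen so that (c + e) / (c - e) <= K whenever c >= mu *)
  define e where "e = \<mu> * (K - 1) / (K + 1)"
  have e: "e > 0" "e < \<mu>" "e * (K + 1) \<le> (K - 1) * \<mu>"
    using \<mu> K by (auto simp: e_def field_simps)
  obtain \<delta> where \<delta>: "\<delta> > 0"
    and close: "\<And>\<sigma> \<sigma>'. \<sigma> \<in> {p..q} \<Longrightarrow> \<sigma>' \<in> {p..q} \<Longrightarrow> dist \<sigma>' \<sigma> < \<delta> \<Longrightarrow>
      dist (\<omega> (d \<sigma>')) (\<omega> (d \<sigma>)) < e"
    using compact_uniformly_continuous[OF \<omega>d_cont compact_Icc] e(1)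
    unfolding uniformly_continuous_on_def by metis
  have "\<bar>F (d \<sigma>2) - F (d \<sigma>1)\<bar> \<le> K * W \<sigma>2 - K * W \<sigma>1"
    if \<sigma>: "p \<le> \<sigma>1" "\<sigma>1 \<le> \<sigma>2" "\<sigma>2 \<le> q" "\<sigma>2 - \<sigma>1 < \<delta>" for \<sigma>1 \<sigma>2
  proof -
    define c where "c = \<omega> (d \<sigma>1)"
    have c: "\<mu> \<le> c"
      using \<sigma>0(2)[of \<sigma>1] \<sigma> by (simp add: \<mu>_def c_def)
    have "e * (K + 1) \<le> (K - 1) * c"
      using e(3) mult_left_mono[OF c, of "K - 1"] K by linarith
    then have "(c + e) / (c - e) \<le> K"
      using e c by (simp add: pos_divide_le_eq algebra_simps)
    moreover have "W \<sigma>1 \<le> W \<sigma>2"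
      using W_mono \<sigma> pq by (auto intro: mono_onD)
    moreover have "\<bar>F (d \<sigma>2) - F (d \<sigma>1)\<bar> \<le> (c + e) / (c - e) * (W \<sigma>2 - W \<sigma>1)"
      using close[of \<sigma>1] \<sigma> pq pos e c
      by (intro osgood_increment_le_of_oscillation) (auto simp: c_def dist_real_def less_imp_le)
    ultimately show ?thesis
      using mult_right_mono[of "(c + e) / (c - e)" K "W \<sigma>2 - W \<sigma>1"] by (simp add: right_diff_distrib)
  qed
  then show ?thesis
    using abs_diff_le_of_local_bound[OF pq(2) \<delta>, of "\<lambda>\<sigma>. F (d \<sigma>)" "\<lambda>\<sigma>. K * W \<sigma>"]
    by (simp add: right_diff_distrib)
qed

lemma osgood_increment_le:
  assumes "p \<in> {a..b}" "q \<in> {a..b}" and pos: "\<And>\<sigma>. \<sigma> \<in> closed_segment p q \<Longrightarrow> d \<sigma> > 0"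
  shows "\<bar>F (d q) - F (d p)\<bar> \<le> \<bar>W q - W p\<bar>"
proof -
  have ordered: "\<bar>F (d q') - F (d p')\<bar> \<le> W q' - W p'"
    if "a \<le> p'" "p' \<le> q'" "q' \<le> b" "\<And>\<sigma>. \<sigma> \<in> {p'..q'} \<Longrightarrow> d \<sigma> > 0" for p' q'
  proof (rule field_le_mult_one_interval)
    fix z :: real
    assume z: "0 < z" "z < 1"
    then have "\<bar>F (d q') - F (d p')\<bar> \<le> (1 / z) * (W q' - W p')"
      using that by (intro osgood_increment_le_mult) auto
    then show "z * \<bar>F (d q') - F (d p')\<bar> \<le> W q' - W p'"
      using z by (simp add: field_simps)
  qed
  show ?thesis
  proof (cases "p \<le> q")
    case True
    then show ?thesis
      using ordered[of p q] assms by (auto simp: closed_segment_eq_real_ivl)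
  next
    case False
    then show ?thesis
      using ordered[of q p] assms by (auto simp: closed_segment_eq_real_ivl abs_minus_commute)
  qed
qed

lemma osgood_upper_bound:
  assumes "s \<in> {a..b}" "\<sigma> \<in> {a..b}" "\<And>\<rho>. \<rho> \<in> closed_segment s \<sigma> \<Longrightarrow> d \<rho> > 0"
  shows "F (d \<sigma>) \<le> F (d s) + (W b - W a)"
proof -
  have "\<bar>F (d \<sigma>) - F (d s)\<bar> \<le> \<bar>W \<sigma> - W s\<bar>"
    using assms by (intro osgood_increment_le) auto
  moreover have "W a \<le> W \<sigma>" "W \<sigma> \<le> W b" "W a \<le> W s" "W s \<le> W b"
    using assms by (auto intro!: mono_onD[OF W_mono])
  ultimately show ?thesis
    by linarith
qed

lemma d_pos_of_blowup:
  assumes blowup: "filterlim F at_top (at_right 0)"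
    and s: "s \<in> {a..b}" "d s > 0" and \<tau>: "\<tau> \<in> {a..b}"
  shows "d \<tau> > 0"
proof (rule ccontr)
  assume "\<not> d \<tau> > 0"
  define Z where "Z = {\<sigma> \<in> {a..b}. d \<sigma> = 0}"
  have "\<tau> \<in> Z"
    using d_nonneg[OF \<tau>] \<open>\<not> d \<tau> > 0\<close> \<tau> by (simp add: Z_def)
  moreover have "closed Z"
    unfolding Z_def by (rule continuous_closed_preimage_constant[OF d_cont closed_atLeastAtMost])
  (* On the segment from s to the zero z nearest to s, F o d stays bounded, yet it tends to
     infinity at z. *)
  ultimately obtain z where "z \<in> Z" and nearest: "\<And>\<sigma>. \<sigma> \<in> Z \<Longrightarrow> dist s z \<le> dist s \<sigma>"
    using distance_attains_inf[of Z s] by blast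
  then have z: "z \<in> {a..b}" "d z = 0" "z \<noteq> s"
    using s by (auto simp: Z_def)
  define T where "T = closed_segment s z"
  have T: "T \<subseteq> {a..b}"
    using s z by (simp add: T_def closed_segment_subset)
  have closer: "\<bar>\<sigma> - s\<bar> < \<bar>z - s\<bar>" if "\<sigma> \<in> T" "\<sigma> \<noteq> z" for \<sigma>
    using that by (auto simp: T_def closed_segment_eq_real_ivl split: if_splits)
  have pos: "d \<sigma> > 0" if "\<sigma> \<in> T" "\<sigma> \<noteq> z" for \<sigma>
    using closer[OF that] nearest[of \<sigma>] d_nonneg[of \<sigma>] T that
    by (force simp: Z_def less_le dist_real_def abs_minus_commute)
  define B where "B = F (d s) + (W b - W a)"
  have bounded: "F (d \<sigma>) \<le> B" if "\<sigma> \<in> T" "\<sigma> \<noteq> z" for \<sigma>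
  proof -
    have "\<rho> \<in> T \<and> \<rho> \<noteq> z" if "\<rho> \<in> closed_segment s \<sigma>" for \<rho>
      using that closer[of \<sigma>] \<open>\<sigma> \<in> T\<close> \<open>\<sigma> \<noteq> z\<close> subset_closed_segment[of s \<sigma> s z]
      by (auto simp: T_def closed_segment_eq_real_ivl split: if_splits)
    then show ?thesis
      using osgood_upper_bound[OF s(1)] pos T that unfolding B_def by blast
  qed
  have near_z: "eventually (\<lambda>\<sigma>. \<sigma> \<in> T \<and> \<sigma> \<noteq> z) (at z within T)"
    by (simp add: eventually_at_filter)
  have "z \<in> T"
    by (simp add: T_def)
  then have "(d \<longlongrightarrow> 0) (at z within T)"
    using continuous_on_subset[OF d_cont T] z(2) by (metis continuous_on_def)
  then have "filterlim d (at_right 0) (at z within T)"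
    unfolding filterlim_at using near_z by (auto elim!: eventually_mono dest: pos)
  then have "filterlim (\<lambda>\<sigma>. F (d \<sigma>)) at_top (at z within T)"
    by (rule filterlim_compose[OF blowup])
  then have "eventually (\<lambda>\<sigma>. B < F (d \<sigma>)) (at z within T)"
    unfolding filterlim_at_top_dense by blast
  with near_z have "eventually (\<lambda>\<sigma>. False) (at z within T)"
    by eventually_elim (use bounded in fastforce)
  moreover have "z islimpt T"
    using z(3) by (simp add: T_def islimpt_closed_segment_endpoint)
  ultimately show False
    by (simp add: trivial_limit_within)
qed

end

section \<open>Integral curves\<close>

lemma interval_lebesgue_integral_eq_integral:
  fixes f :: "real \<Rightarrow> 'a::euclidean_space"
  assumes "interval_lebesgue_integrable lborel (ereal p) (ereal q) f" "p \<le> q"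
  shows "f integrable_on {p..q}" "(LBINT x=p..q. f x) = integral {p..q} f"
proof -
  have f: "set_integrable lborel {p<..<q} f"
    using assms by (simp add: interval_lebesgue_integrable_def)
  show "f integrable_on {p..q}"
    using set_borel_integral_eq_integral(1)[OF f] by (simp add: integrable_on_open_interval_real)
  have "(LBINT x=p..q. f x) = (LINT x : {p<..<q} | lborel. f x)"
    using assms(2) by (simp add: interval_lebesgue_integral_le_eq)
  also have "\<dots> = integral {p..q} f"
    using set_borel_integral_eq_integral(2)[OF f] by (simp add: integral_open_interval_real)
  finally show "(LBINT x=p..q. f x) = integral {p..q} f" .
qed

lemma interval_lebesgue_integrable_imp_integrable_on:
  fixes f :: "real \<Rightarrow> 'a::euclidean_space"
  assumes "interval_lebesgue_integrable lborel (ereal p) (ereal q) f"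
  shows "f integrable_on {min p q..max p q}"
  using interval_lebesgue_integral_eq_integral(1)[OF assms]
    interval_lebesgue_integral_eq_integral(1)[OF interval_integrable_endpoints_reverse[THEN iffD1, OF assms]]
  by (cases "p \<le> q") auto

lemma interval_lebesgue_integral_eq_integral_diff:
  fixes f :: "real \<Rightarrow> 'a::euclidean_space"
  assumes "interval_lebesgue_integrable lborel (ereal p) (ereal q) f" "f integrable_on {a..b}"
    and "p \<in> {a..b}" "q \<in> {a..b}"
  shows "(LBINT x=p..q. f x) = integral {a..q} f - integral {a..p} f"
proof -
  have ordered: "integral {p'..q'} f = integral {a..q'} f - integral {a..p'} f"
    if "p' \<in> {a..b}" "q' \<in> {a..b}" "p' \<le> q'" for p' q'
    using Henstock_Kurzweil_Integration.integral_combine[of a p' q' f] integrable_on_subinterval[OF assms(2), of a q'] that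
    by (simp add: algebra_simps)
  show ?thesis
  proof (cases "p \<le> q")
    case True
    then show ?thesis
      using assms(3,4) ordered[of p q] interval_lebesgue_integral_eq_integral(2)[OF assms(1)] by simp
  next
    case False
    then show ?thesis
      using assms(3,4) ordered[of q p]
        interval_lebesgue_integral_eq_integral(2)[OF interval_integrable_endpoints_reverse[THEN iffD1, OF assms(1)]]
      by (simp add: interval_integral_endpoints_reverse[of "ereal p"])
  qed
qed

lemma integral_equation_of_LBINT_equation:
  fixes X g :: "real \<Rightarrow> 'a::euclidean_space"
  assumes int: "\<And>\<tau>. \<tau> \<in> {a..b} \<Longrightarrow> interval_lebesgue_integrable lborel (ereal s) (ereal \<tau>) g"
    and eq: "\<And>\<tau>. \<tau> \<in> {a..b} \<Longrightarrow> X \<tau> = X s + (LBINT \<sigma>=s..\<tau>. g \<sigma>)"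
    and s: "s \<in> {a..b}"
  shows "g integrable_on {a..b}" "\<And>\<tau>. \<tau> \<in> {a..b} \<Longrightarrow> X \<tau> = X a + integral {a..\<tau>} g"
proof -
  have "g integrable_on {a..s}" "g integrable_on {s..b}"
    using interval_lebesgue_integrable_imp_integrable_on[OF int, of a]
      interval_lebesgue_integrable_imp_integrable_on[OF int, of b] s
    by (simp_all add: min_absorb2 max_absorb1 min_absorb1 max_absorb2)
  then show g: "g integrable_on {a..b}"
    using s by (intro Henstock_Kurzweil_Integration.integrable_combine[of a s b]) auto
  have rep: "X \<tau> = X s + (integral {a..\<tau>} g - integral {a..s} g)" if "\<tau> \<in> {a..b}" for \<tau>
    using eq[OF that] interval_lebesgue_integral_eq_integral_diff[OF int[OF that] g s that] by simp
  have "X a = X s - integral {a..s} g"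
    using rep[of a] s by simp
  then show "X \<tau> = X a + integral {a..\<tau>} g" if "\<tau> \<in> {a..b}" for \<tau>
    using rep[OF that] by simp
qed

lemma integral_equation_diff:
  fixes X g :: "real \<Rightarrow> 'a::banach"
  assumes g: "g integrable_on {a..b}" and X: "\<And>\<tau>. \<tau> \<in> {a..b} \<Longrightarrow> X \<tau> = X a + integral {a..\<tau>} g"
    and \<tau>: "a \<le> \<tau>1" "\<tau>1 \<le> \<tau>2" "\<tau>2 \<le> b"
  shows "X \<tau>2 - X \<tau>1 = integral {\<tau>1..\<tau>2} g"
proof -
  have "integral {a..\<tau>2} g = integral {a..\<tau>1} g + integral {\<tau>1..\<tau>2} g"
    using \<tau> integrable_on_subinterval[OF g, of a \<tau>2]
    by (simp add: Henstock_Kurzweil_Integration.integral_combine)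
  then show ?thesis
    using X[of \<tau>1] X[of \<tau>2] \<tau> by simp
qed

lemma continuous_on_integral_equation:
  fixes X g :: "real \<Rightarrow> 'a::banach"
  assumes "g integrable_on {a..b}" "\<And>\<tau>. \<tau> \<in> {a..b} \<Longrightarrow> X \<tau> = X a + integral {a..\<tau>} g"
  shows "continuous_on {a..b} X"
  using continuous_on_add[OF continuous_on_const indefinite_integral_continuous_1[OF assms(1)], of "X a"]
  by (rule continuous_on_eq) (metis assms(2))

lemma dist_integral_curves_increment_le:
  fixes u :: "'a::euclidean_space \<Rightarrow> real \<Rightarrow> 'a" and X Y :: "real \<Rightarrow> 'a" and \<omega> U :: "real \<Rightarrow> real"
  assumes U: "U integrable_on {a..b}" "\<And>\<sigma>. \<sigma> \<in> {a..b} \<Longrightarrow> U \<sigma> \<ge> 0"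
    and u_modulus: "\<And>p q \<sigma>. \<sigma> \<in> {a..b} \<Longrightarrow> p \<noteq> q \<Longrightarrow> norm (u p \<sigma> - u q \<sigma>) \<le> U \<sigma> * \<omega> (dist p q)"
    and X: "(\<lambda>\<sigma>. u (X \<sigma>) \<sigma>) integrable_on {a..b}"
      "\<And>\<tau>. \<tau> \<in> {a..b} \<Longrightarrow> X \<tau> = X a + integral {a..\<tau>} (\<lambda>\<sigma>. u (X \<sigma>) \<sigma>)"
    and Y: "(\<lambda>\<sigma>. u (Y \<sigma>) \<sigma>) integrable_on {a..b}"
      "\<And>\<tau>. \<tau> \<in> {a..b} \<Longrightarrow> Y \<tau> = Y a + integral {a..\<tau>} (\<lambda>\<sigma>. u (Y \<sigma>) \<sigma>)"
    and \<tau>: "a \<le> \<tau>1" "\<tau>1 \<le> \<tau>2" "\<tau>2 \<le> b"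
    and M: "\<And>\<sigma>. \<sigma> \<in> {\<tau>1..\<tau>2} \<Longrightarrow> X \<sigma> \<noteq> Y \<sigma> \<and> \<omega> (dist (X \<sigma>) (Y \<sigma>)) \<le> M"
  shows "\<bar>dist (X \<tau>2) (Y \<tau>2) - dist (X \<tau>1) (Y \<tau>1)\<bar> \<le> M * integral {\<tau>1..\<tau>2} U"
proof -
  have "\<bar>dist (X \<tau>2) (Y \<tau>2) - dist (X \<tau>1) (Y \<tau>1)\<bar> \<le> norm ((X \<tau>2 - X \<tau>1) - (Y \<tau>2 - Y \<tau>1))"
    unfolding dist_norm by (rule order_trans[OF norm_triangle_ineq3]) (simp add: algebra_simps)
  also have "(X \<tau>2 - X \<tau>1) - (Y \<tau>2 - Y \<tau>1) = integral {\<tau>1..\<tau>2} (\<lambda>\<sigma>. u (X \<sigma>) \<sigma> - u (Y \<sigma>) \<sigma>)"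
    using integral_equation_diff[OF X \<tau>] integral_equation_diff[OF Y \<tau>] \<tau>
      integrable_on_subinterval[OF X(1)] integrable_on_subinterval[OF Y(1)]
    by (simp add: integral_diff)
  also have "norm \<dots> \<le> integral {\<tau>1..\<tau>2} (\<lambda>\<sigma>. M * U \<sigma>)"
  proof (rule integral_norm_bound_integral)
    show "(\<lambda>\<sigma>. u (X \<sigma>) \<sigma> - u (Y \<sigma>) \<sigma>) integrable_on {\<tau>1..\<tau>2}"
      using \<tau> by (intro integrable_diff integrable_on_subinterval[OF X(1)] integrable_on_subinterval[OF Y(1)]) auto
    show "(\<lambda>\<sigma>. M * U \<sigma>) integrable_on {\<tau>1..\<tau>2}"
      using \<tau> integrable_on_subinterval[OF U(1), of \<tau>1 \<tau>2] by (simp add: integrable_on_mult_right)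
    fix \<sigma> assume "\<sigma> \<in> {\<tau>1..\<tau>2}"
    then have \<sigma>: "\<sigma> \<in> {a..b}" "X \<sigma> \<noteq> Y \<sigma>" "\<omega> (dist (X \<sigma>) (Y \<sigma>)) \<le> M"
      using M \<tau> by auto
    then have "norm (u (X \<sigma>) \<sigma> - u (Y \<sigma>) \<sigma>) \<le> U \<sigma> * \<omega> (dist (X \<sigma>) (Y \<sigma>))"
      using u_modulus by simp
    also have "\<dots> \<le> M * U \<sigma>"
      using mult_left_mono[OF \<sigma>(3) U(2)[OF \<sigma>(1)]] by (simp add: mult.commute)
    finally show "norm (u (X \<sigma>) \<sigma> - u (Y \<sigma>) \<sigma>) \<le> M * U \<sigma>" .
  qed
  finally show ?thesis
    by simp
qed

context osgood_modulus
begin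

lemma integral_curves_osgood_estimate:
  fixes u :: "'a::euclidean_space \<Rightarrow> real \<Rightarrow> 'a" and X Y :: "real \<Rightarrow> 'a" and U :: "real \<Rightarrow> real"
  assumes F_blowup: "filterlim F at_top (at_right 0)"
    and U: "U integrable_on {a..b}"
    and u_bound: "\<And>p \<sigma>. \<sigma> \<in> {a..b} \<Longrightarrow> norm (u p \<sigma>) \<le> U \<sigma>"
    and u_modulus: "\<And>p q \<sigma>. \<sigma> \<in> {a..b} \<Longrightarrow> p \<noteq> q \<Longrightarrow> norm (u p \<sigma> - u q \<sigma>) \<le> U \<sigma> * \<omega> (dist p q)"
    and X: "(\<lambda>\<sigma>. u (X \<sigma>) \<sigma>) integrable_on {a..b}"
      "\<And>\<tau>. \<tau> \<in> {a..b} \<Longrightarrow> X \<tau> = X a + integral {a..\<tau>} (\<lambda>\<sigma>. u (X \<sigma>) \<sigma>)"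
    and Y: "(\<lambda>\<sigma>. u (Y \<sigma>) \<sigma>) integrable_on {a..b}"
      "\<And>\<tau>. \<tau> \<in> {a..b} \<Longrightarrow> Y \<tau> = Y a + integral {a..\<tau>} (\<lambda>\<sigma>. u (Y \<sigma>) \<sigma>)"
    and st: "s \<in> {a..b}" "t \<in> {a..b}" "X s \<noteq> Y s"
  shows "X t \<noteq> Y t \<and>
    \<bar>F (dist (X t) (Y t)) - F (dist (X s) (Y s))\<bar> \<le> \<bar>integral {a..t} U - integral {a..s} U\<bar>"
proof -
  define d where "d \<tau> = dist (X \<tau>) (Y \<tau>)" for \<tau>
  define W where "W \<tau> = integral {a..\<tau>} U" for \<tau>
  have W_diff: "W \<tau>2 - W \<tau>1 = integral {\<tau>1..\<tau>2} U" if "a \<le> \<tau>1" "\<tau>1 \<le> \<tau>2" "\<tau>2 \<le> b" for \<tau>1 \<tau>2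
    using integral_equation_diff[OF U, of W] that by (simp add: W_def)
  have U_nonneg: "U \<sigma> \<ge> 0" if "\<sigma> \<in> {a..b}" for \<sigma>
    using u_bound[OF that] norm_ge_zero order_trans by blast
  have "continuous_on {a..b} X" "continuous_on {a..b} Y"
    using continuous_on_integral_equation[OF X] continuous_on_integral_equation[OF Y] by auto
  then have "continuous_on {a..b} d"
    unfolding d_def by (rule continuous_on_dist)
  moreover have "mono_on {a..b} W"
  proof (rule mono_onI)
    fix r r' assume "r \<in> {a..b}" "r' \<in> {a..b}" "r \<le> r'"
    then have "0 \<le> integral {r..r'} U"
      using U_nonneg integrable_on_subinterval[OF U, of r r'] by (intro integral_nonneg) auto
    then show "W r \<le> W r'"
      using W_diff[of r r'] \<open>r \<in> {a..b}\<close> \<open>r' \<in> {a..b}\<close> \<open>r \<le> r'\<close> by simp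
  qed
  moreover have "\<bar>d \<tau>2 - d \<tau>1\<bar> \<le> M * (W \<tau>2 - W \<tau>1)"
    if "a \<le> \<tau>1" "\<tau>1 \<le> \<tau>2" "\<tau>2 \<le> b" "\<And>\<sigma>. \<sigma> \<in> {\<tau>1..\<tau>2} \<Longrightarrow> d \<sigma> > 0 \<and> \<omega> (d \<sigma>) \<le> M"
    for \<tau>1 \<tau>2 M
    using dist_integral_curves_increment_le[OF U U_nonneg u_modulus X Y that(1-3)] that W_diff
    by (simp add: d_def)
  ultimately interpret osgood_control \<omega> F d W a b
    by unfold_locales (auto simp: d_def)
  have pos: "d \<tau> > 0" if "\<tau> \<in> {a..b}" for \<tau>
    using d_pos_of_blowup[OF F_blowup st(1) _ that] st(3) by (simp add: d_def)
  have "closed_segment s t \<subseteq> {a..b}"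
    using st by (simp add: closed_segment_subset)
  then have "\<bar>F (d t) - F (d s)\<bar> \<le> \<bar>W t - W s\<bar>"
    using st pos by (intro osgood_increment_le) auto
  then show ?thesis
    using pos[OF st(2)] by (simp add: d_def W_def)
qed

end

section \<open>The modulus and the Osgood function of the symbol\<close>

locale Cm_symbol =
  fixes m :: "real \<Rightarrow> real"
  assumes m_pos: "\<And>r. r > 0 \<Longrightarrow> m r > 0"
    and m_cont: "continuous_on {0<..} m"
    and m_mono: "\<And>p q. 0 < p \<Longrightarrow> p \<le> q \<Longrightarrow> m p \<le> m q"

lemma H1_imp_Cm_symbol:
  assumes "H1 n m"
  shows "Cm_symbol m"
proof -
  have m_deriv: "(m has_real_derivative deriv m r) (at r)" if "r > 0" for r
  proof -
    have "\<forall>j<n + 4. \<forall>r\<in>{0<..}. ((deriv ^^ j) m) differentiable (at r)"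
      using assms by (simp add: H1_def Ck_on_def)
    then have "m differentiable (at r)"
      using that by (metis add_gr_0 funpow_0 greaterThan_iff zero_less_numeral)
    then show ?thesis
      by (simp add: DERIV_deriv_iff_real_differentiable)
  qed
  have pos: "m r > 0" "deriv m r \<ge> 0" if "r > 0" for r
    using assms that by (auto simp: H1_def)
  show ?thesis
  proof
    show "continuous_on {0<..} m"
      using m_deriv by (intro continuous_at_imp_continuous_on) (auto intro: DERIV_isCont)
    show "m p \<le> m q" if "0 < p" "p \<le> q" for p q
      using that(2)
    proof (rule DERIV_nonneg_imp_nondecreasing)
      fix r assume "p \<le> r" "r \<le> q"
      then show "\<exists>y. (m has_real_derivative y) (at r) \<and> 0 \<le> y"
        using that m_deriv[of r] pos[of r] by (intro exI[of _ "deriv m r"]) auto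
    qed
  qed (use pos in auto)
qed

definition Cm_modulus :: "(real \<Rightarrow> real) \<Rightarrow> real \<Rightarrow> real" where
  "Cm_modulus m r = r * (m (inverse r) + 1)"

definition Cm_osgood :: "(real \<Rightarrow> real) \<Rightarrow> real \<Rightarrow> real" where
  "Cm_osgood m r = (LBINT \<rho>=r..1. 1 / Cm_modulus m \<rho>)"

lemma Ht_eq_Cm_osgood: "Ht m R = Cm_osgood m (inverse R)"
  by (simp add: Ht_def Cm_osgood_def Cm_modulus_def)

context Cm_symbol
begin

lemma Cm_modulus_pos: "r > 0 \<Longrightarrow> Cm_modulus m r > 0"
  using m_pos[of "inverse r"] by (simp add: Cm_modulus_def add_pos_pos)

lemma continuous_on_Cm_modulus: "continuous_on {0<..} (Cm_modulus m)"
proof -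
  have "continuous_on {0<..} (\<lambda>r. m (inverse r))"
    by (rule continuous_on_compose2[OF m_cont]) (auto intro!: continuous_intros)
  then show ?thesis
    unfolding Cm_modulus_def by (auto intro!: continuous_intros)
qed

lemma Cm_osgood_deriv:
  assumes "r > 0"
  shows "(Cm_osgood m has_real_derivative -(1 / Cm_modulus m r)) (at r)"
proof -
  define a b where "a = min r 1 / 2" and "b = max r 1 + 1"
  have ab: "0 < a" "a < r" "r < b" "a \<le> 1" "1 \<le> b"
    using assms by (auto simp: a_def b_def)
  have "continuous_on {a..b} (\<lambda>\<rho>. 1 / Cm_modulus m \<rho>)"
    using ab Cm_modulus_pos
    by (intro continuous_on_divide continuous_on_const continuous_on_subset[OF continuous_on_Cm_modulus])
      (auto simp: less_imp_neq[symmetric])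
  then have "((\<lambda>u. LBINT \<rho>=1..u. 1 / Cm_modulus m \<rho>) has_vector_derivative 1 / Cm_modulus m r)
      (at r within {a..b})"
    using interval_integral_FTC2[of a 1 b "\<lambda>\<rho>. 1 / Cm_modulus m \<rho>" r] ab by (simp add: one_ereal_def)
  then have "((\<lambda>u. LBINT \<rho>=1..u. 1 / Cm_modulus m \<rho>) has_real_derivative 1 / Cm_modulus m r) (at r)"
    using ab by (simp add: has_real_derivative_iff_has_vector_derivative at_within_Icc_at)
  then have "((\<lambda>u. - (LBINT \<rho>=1..u. 1 / Cm_modulus m \<rho>)) has_real_derivative -(1 / Cm_modulus m r)) (at r)"
    by (rule DERIV_minus)
  moreover have "(\<lambda>u. - (LBINT \<rho>=1..u. 1 / Cm_modulus m \<rho>)) = Cm_osgood m"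
    by (auto simp: Cm_osgood_def interval_integral_endpoints_reverse[of _ 1])
  ultimately show ?thesis
    by simp
qed

sublocale osgood_modulus "Cm_modulus m" "Cm_osgood m"
  using Cm_modulus_pos continuous_on_Cm_modulus Cm_osgood_deriv by unfold_locales

lemma Cm_osgood_1: "Cm_osgood m 1 = 0"
  by (simp add: Cm_osgood_def one_ereal_def)

lemma Cm_osgood_strict_antimono:
  assumes "0 < p" "p < q"
  shows "Cm_osgood m q < Cm_osgood m p"
  using assms(2)
proof (rule DERIV_neg_imp_decreasing)
  fix r assume "p \<le> r" "r \<le> q"
  then show "\<exists>y. (Cm_osgood m has_real_derivative y) (at r) \<and> y < 0"
    using assms Cm_osgood_deriv[of r] Cm_modulus_pos[of r]
    by (intro exI[of _ "-(1 / Cm_modulus m r)"]) auto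
qed

lemma ln_ratio_le_Cm_osgood_diff:
  assumes "0 < p" "p \<le> q"
  shows "ln q - ln p \<le> (m (inverse p) + 1) * (Cm_osgood m p - Cm_osgood m q)"
proof -
  define c where "c = m (inverse p) + 1"
  have c: "c > 0"
    using m_pos[of "inverse p"] assms(1) by (simp add: c_def)
  have "(\<lambda>r. Cm_osgood m r + ln r / c) q \<le> (\<lambda>r. Cm_osgood m r + ln r / c) p"
  proof (rule DERIV_nonpos_imp_nonincreasing[OF assms(2)])
    fix r assume r: "p \<le> r" "r \<le> q"
    then have "r > 0"
      using assms by auto
    have "m (inverse r) \<le> m (inverse p)"
      using m_mono[of "inverse r" "inverse p"] \<open>r > 0\<close> r(1) assms(1) by (simp add: le_imp_inverse_le)
    then have "Cm_modulus m r \<le> r * c"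
      using \<open>r > 0\<close> by (simp add: Cm_modulus_def c_def)
    then have "1 / (r * c) \<le> 1 / Cm_modulus m r"
      using Cm_modulus_pos[OF \<open>r > 0\<close>] by (intro divide_left_mono) auto
    moreover have "((\<lambda>r. Cm_osgood m r + ln r / c) has_real_derivative
        (-(1 / Cm_modulus m r) + inverse r / c)) (at r)"
      using \<open>r > 0\<close> c by (auto intro!: derivative_eq_intros Cm_osgood_deriv simp: field_simps)
    ultimately show "\<exists>y. ((\<lambda>r. Cm_osgood m r + ln r / c) has_real_derivative y) (at r) \<and> y \<le> 0"
      using \<open>r > 0\<close> c by (intro exI conjI) (auto simp: field_simps)
  qed
  then have "(ln q - ln p) / c \<le> Cm_osgood m p - Cm_osgood m q"
    by (simp add: diff_divide_distrib)
  then show ?thesis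
    using c by (simp add: c_def pos_divide_le_eq mult.commute)
qed

lemma Cm_osgood_le_exp:
  assumes "0 < D0" "0 < D" "0 \<le> I" "Cm_osgood m D0 - Cm_osgood m D \<le> I"
  shows "D \<le> D0 * exp ((m (inverse D0) + 1) * I)"
proof -
  define c where "c = m (inverse D0) + 1"
  have c: "c > 0"
    using m_pos[of "inverse D0"] assms(1) by (simp add: c_def)
  show ?thesis
  proof (cases "D \<le> D0")
    case True
    moreover have "D0 \<le> D0 * exp (c * I)"
      using assms(1,3) c by simp
    ultimately show ?thesis
      by (simp add: c_def)
  next
    case False
    then have "ln D - ln D0 \<le> c * (Cm_osgood m D0 - Cm_osgood m D)"
      using ln_ratio_le_Cm_osgood_diff[of D0 D] assms(1) by (simp add: c_def)
    also have "\<dots> \<le> c * I"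
      using assms(4) c by (simp add: mult_left_mono)
    finally have "ln D - ln D0 \<le> c * I" .
    then have "exp (ln D) \<le> exp (ln D0 + c * I)"
      by simp
    then show ?thesis
      using assms(1,2) by (simp add: exp_add c_def)
  qed
qed

lemma Ht_deriv:
  assumes "R > 0"
  shows "(Ht m has_real_derivative 1 / (R * (m R + 1))) (at R)"
proof -
  have "((\<lambda>R. Cm_osgood m (inverse R)) has_real_derivative
      -(1 / Cm_modulus m (inverse R)) * - (inverse R ^ Suc (Suc 0))) (at R)"
    using assms by (intro DERIV_chain2[OF Cm_osgood_deriv DERIV_inverse]) auto
  then show ?thesis
    using assms by (simp add: Ht_eq_Cm_osgood[abs_def] Cm_modulus_def field_simps power2_eq_square)
qed

lemma Ht_strict_mono: "0 < p \<Longrightarrow> p < q \<Longrightarrow> Ht m p < Ht m q"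
  by (simp add: Ht_eq_Cm_osgood Cm_osgood_strict_antimono less_imp_inverse_less)

lemma Ht_mono: "0 < p \<Longrightarrow> p \<le> q \<Longrightarrow> Ht m p \<le> Ht m q"
  using Ht_strict_mono[of p q] by (cases "p = q") auto

lemma Ht_inv_eqI:
  assumes "R > 0" "Ht m R = y"
  shows "Ht_inv m y = R"
  unfolding Ht_inv_def
proof (rule the_equality)
  show "\<And>r. 0 < r \<and> Ht m r = y \<Longrightarrow> r = R"
    using Ht_strict_mono assms by (metis linorder_neqE_linordered_idom order_less_irrefl)
qed (use assms in auto)

lemma Ht_inv_le:
  assumes "R > 0" "y \<le> Ht m R"
  shows "Ht_inv m y \<le> R"
proof -
  define c where "c = m 1 + 1"
  define R1 where "R1 = min R (exp (- (c * \<bar>y\<bar>)))"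
  have c: "c > 0"
    using m_pos[of 1] by (simp add: c_def)
  have R1: "0 < R1" "R1 \<le> R"
    using assms(1) by (auto simp: R1_def)
  have "c * \<bar>y\<bar> \<le> c * (- Cm_osgood m (exp (c * \<bar>y\<bar>)))"
    using ln_ratio_le_Cm_osgood_diff[of 1 "exp (c * \<bar>y\<bar>)"] c by (simp add: c_def Cm_osgood_1)
  then have "Cm_osgood m (exp (c * \<bar>y\<bar>)) \<le> y"
    using c abs_ge_minus_self[of y] by (simp only: mult_le_cancel_left_pos)
  then have "Ht m (exp (- (c * \<bar>y\<bar>))) \<le> y"
    by (simp add: Ht_eq_Cm_osgood exp_minus)
  then have "Ht m R1 \<le> y"
    using Ht_mono[of R1 "exp (- (c * \<bar>y\<bar>))"] R1 by (simp add: R1_def)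
  moreover have "isCont (Ht m) r" if "r \<in> {R1..R}" for r
    using Ht_deriv[of r] R1 that by (auto intro: DERIV_isCont)
  then have "continuous_on {R1..R} (Ht m)"
    by (intro continuous_at_imp_continuous_on) auto
  ultimately obtain R0 where "R1 \<le> R0" "R0 \<le> R" "Ht m R0 = y"
    using IVT'[of "Ht m" R1 y R] assms(2) R1 by auto
  then show ?thesis
    using Ht_inv_eqI[of R0 y] R1 by simp
qed

lemma Ht_convergent_of_bounded:
  assumes bdd: "\<And>R. R > 0 \<Longrightarrow> Ht m R \<le> B"
  shows "(Ht m \<longlongrightarrow> (SUP R\<in>{2..}. Ht m R)) at_top"
proof (rule increasing_tendsto)
  have bdd_T: "bdd_above (Ht m ` {2..})"
    using bdd by (intro bdd_aboveI2[where M = B]) auto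
  show "\<forall>\<^sub>F R in at_top. Ht m R \<le> (SUP R\<in>{2..}. Ht m R)"
    using eventually_ge_at_top[of 2] by eventually_elim (auto intro: cSUP_upper bdd_T)
  fix x assume "x < (SUP R\<in>{2..}. Ht m R)"
  then obtain R0 where "R0 \<ge> 2" "x < Ht m R0"
    using less_cSUP_iff[OF _ bdd_T] by auto
  show "\<forall>\<^sub>F R in at_top. x < Ht m R"
    using eventually_ge_at_top[of R0]
    by eventually_elim (use \<open>R0 \<ge> 2\<close> \<open>x < Ht m R0\<close> Ht_mono[of R0] in fastforce)
qed

lemma Osg_integrand_le:
  assumes "x \<ge> 2"
  shows "1 / (x * ln x * m x) \<le> (m 2 + 1) / (m 2 * ln 2) * (1 / (x * (m x + 1)))"
proof -
  have x: "x > 0" "ln x > 0" "m x \<ge> m 2" "m 2 > 0" "m x > 0"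
    using assms m_mono[of 2 x] m_pos[of 2] by auto
  have "1 / (x * ln x * m x) = (1 + 1 / m x) * (1 / ln x) * (1 / (x * (m x + 1)))"
    using x by (simp add: divide_simps add_pos_pos)
  also have "\<dots> \<le> (1 + 1 / m 2) * (1 / ln 2) * (1 / (x * (m x + 1)))"
    using x assms by (intro mult_right_mono mult_mono add_left_mono divide_left_mono) auto
  also have "\<dots> = (m 2 + 1) / (m 2 * ln 2) * (1 / (x * (m x + 1)))"
    using x by (simp add: field_simps)
  finally show ?thesis .
qed

lemma Osg_integral_finite_of_Ht_convergent:
  assumes "(Ht m \<longlongrightarrow> T) at_top"
  shows "(\<integral>\<^sup>+ r. indicator {2..} r * ennreal (1 / (r * ln r * m r)) \<partial>lborel) < \<infinity>"
proof -
  define h where "h x = 1 / (x * (m x + 1))" for x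
  define f where "f x = h (max x 2)" for x
  have "continuous_on {2..} h"
  proof -
    have "x * (m x + 1) \<noteq> 0" if "x \<in> {2..}" for x
      using that m_pos[of x] by auto
    then show ?thesis
      unfolding h_def by (intro continuous_intros continuous_on_subset[OF m_cont]) auto
  qed
  then have "continuous_on UNIV f"
    unfolding f_def by (rule continuous_on_compose2) (auto intro: continuous_intros)
  then have f_meas: "f \<in> borel_measurable borel"
    by (rule borel_measurable_continuous_onI)
  have f_int: "(\<integral>\<^sup>+x. ennreal (f x) * indicator {2..} x \<partial>lborel) = T - Ht m 2"
    using assms Ht_deriv m_pos
    by (intro nn_integral_FTC_atLeast[OF f_meas]) (auto simp: f_def h_def add_pos_pos less_imp_le)
  define C where "C = (m 2 + 1) / (m 2 * ln 2)"
  have "(\<integral>\<^sup>+ r. indicator {2..} r * ennreal (1 / (r * ln r * m r)) \<partial>lborel)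
      \<le> (\<integral>\<^sup>+x. ennreal C * (ennreal (f x) * indicator {2..} x) \<partial>lborel)"
    using Osg_integrand_le m_pos[of 2]
    by (intro nn_integral_mono)
      (auto split: split_indicator simp: C_def f_def h_def ennreal_mult'[symmetric] intro!: ennreal_leI)
  also have "\<dots> = ennreal C * (T - Ht m 2)"
    using f_meas by (subst nn_integral_cmult) (auto simp: f_int)
  also have "\<dots> < \<infinity>"
    by (simp add: ennreal_mult_less_top)
  finally show ?thesis .
qed

lemma Cm_osgood_unbounded:
  assumes "Osg m"
  shows "\<exists>r>0. B < Cm_osgood m r"
proof (rule ccontr)
  assume "\<not> ?thesis"
  then have "Ht m R \<le> B" if "R > 0" for R
    using that by (metis Ht_eq_Cm_osgood inverse_positive_iff_positive not_less)
  then show False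
    using Osg_integral_finite_of_Ht_convergent[OF Ht_convergent_of_bounded[of B]] assms
    by (simp add: Osg_def)
qed

lemma Cm_osgood_blowup:
  assumes "Osg m"
  shows "filterlim (Cm_osgood m) at_top (at_right 0)"
proof -
  have "\<exists>r>0. B < Cm_osgood m r" for B
    using Cm_osgood_unbounded[OF assms] .
  then show ?thesis
    unfolding filterlim_at_top_dense eventually_at_right_field
    by (metis Cm_osgood_strict_antimono order.strict_trans)
qed

lemma Cm_norm_bounds:
  fixes v :: "pt \<Rightarrow> pt"
  assumes "Cm_space m v"
  shows "norm (v p) \<le> Cm_norm m v"
    and "p \<noteq> q \<Longrightarrow> norm (v p - v q) \<le> Cm_norm m v * Cm_modulus m (dist p q)"
proof -
  define Q where "Q = {norm (v x - v y) / Cm_modulus m (dist x y) | x y. x \<noteq> y}"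
  have Q: "bdd_above Q"
    using assms by (simp add: Cm_space_def Q_def Cm_modulus_def)
  have sup: "bdd_above (range (\<lambda>x. norm (v x)))"
    using assms unfolding Cm_space_def bounded_iff bdd_above_def by auto
  have norm_le: "norm (v w) \<le> (SUP x. norm (v x))" for w
    by (rule cSUP_upper[OF _ sup]) simp
  have Cm_norm: "Cm_norm m v = (SUP x. norm (v x)) + Sup Q"
    by (simp add: Cm_norm_def Q_def Cm_modulus_def)
  have Q_mem: "norm (v x - v y) / Cm_modulus m (dist x y) \<in> Q" if "x \<noteq> y" for x y
    using that unfolding Q_def by blast
  obtain z :: pt where "z \<noteq> 0"
    using vector_choose_size[of 1] by force
  then have "0 \<le> norm (v z - v 0) / Cm_modulus m (dist z 0)"
    using Cm_modulus_pos[of "dist z 0"] by simp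
  also have "\<dots> \<le> Sup Q"
    using cSup_upper[OF Q_mem[OF \<open>z \<noteq> 0\<close>] Q] .
  finally have "0 \<le> Sup Q" .
  then show "norm (v p) \<le> Cm_norm m v"
    using norm_le[of p] Cm_norm by linarith
  assume "p \<noteq> q"
  then have "norm (v p - v q) / Cm_modulus m (dist p q) \<le> Sup Q"
    by (intro cSup_upper[OF Q_mem Q])
  also have "\<dots> \<le> Cm_norm m v"
    using Cm_norm norm_le[of p] norm_ge_zero[of "v p"] by linarith
  finally show "norm (v p - v q) \<le> Cm_norm m v * Cm_modulus m (dist p q)"
    using Cm_modulus_pos[of "dist p q"] \<open>p \<noteq> q\<close> by (simp add: pos_divide_le_eq)
qed

lemma flow_Cm_osgood_estimate:
  fixes u :: "pt \<Rightarrow> real \<Rightarrow> pt" and \<Phi> :: "real \<Rightarrow> real \<Rightarrow> pt \<Rightarrow> pt"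
  assumes osg: "Osg m"
    and u_Cm: "\<And>t. t \<ge> 0 \<Longrightarrow> Cm_space m (\<lambda>x. u x t)"
    and u_L1: "set_integrable lborel {0..} (\<lambda>t. Cm_norm m (\<lambda>x. u x t))"
    and flow_int: "\<And>t x. t \<ge> 0 \<Longrightarrow>
        interval_lebesgue_integrable lborel (ereal s) (ereal t) (\<lambda>\<tau>. u (\<Phi> \<tau> s x) \<tau>)"
    and flow: "\<And>t x. t \<ge> 0 \<Longrightarrow> \<Phi> t s x = x + (LBINT \<tau>=s..t. u (\<Phi> \<tau> s x) \<tau>)"
    and ts: "t \<ge> 0" "s \<ge> 0" and xy: "x \<noteq> y"
  shows "\<Phi> t s x \<noteq> \<Phi> t s y \<and>
    Cm_osgood m (dist x y) - Cm_osgood m (dist (\<Phi> t s x) (\<Phi> t s y))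
      \<le> \<bar>LBINT \<tau>=s..t. Cm_norm m (\<lambda>z. u z \<tau>)\<bar>"
proof -
  define a b where "a = min s t" and "b = max s t"
  define U where "U \<tau> = Cm_norm m (\<lambda>z. u z \<tau>)" for \<tau>
  define X where "X z \<tau> = \<Phi> \<tau> s z" for z \<tau>
  have ab: "s \<in> {a..b}" "t \<in> {a..b}" "\<And>\<tau>. \<tau> \<in> {a..b} \<Longrightarrow> \<tau> \<ge> 0"
    using ts by (auto simp: a_def b_def)
  have X_s: "X z s = z" for z
    using flow[OF ts(2)] by (simp add: X_def)
  have "X z \<tau> = X z s + (LBINT \<sigma>=s..\<tau>. u (X z \<sigma>) \<sigma>)" if "\<tau> \<in> {a..b}" for z \<tau>
    unfolding X_s unfolding X_def by (rule flow[OF ab(3)[OF that]])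
  then have X_int: "(\<lambda>\<sigma>. u (X z \<sigma>) \<sigma>) integrable_on {a..b}"
    and X_eq: "\<tau> \<in> {a..b} \<Longrightarrow> X z \<tau> = X z a + integral {a..\<tau>} (\<lambda>\<sigma>. u (X z \<sigma>) \<sigma>)" for z \<tau>
    using integral_equation_of_LBINT_equation[of a b s "\<lambda>\<sigma>. u (X z \<sigma>) \<sigma>" "X z"]
      flow_int[OF ab(3)] ab(1) unfolding X_def by blast+
  have U_int: "interval_lebesgue_integrable lborel (ereal s) (ereal t) U"
    unfolding U_def[abs_def] interval_lebesgue_integrable_def
    using ts by (auto simp: einterval_eq intro!: set_integrable_subset[OF u_L1])
  have U_int': "U integrable_on {a..b}"
    using interval_lebesgue_integrable_imp_integrable_on[OF U_int] by (simp add: a_def b_def)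
  have u_bounds: "norm (u p \<sigma>) \<le> U \<sigma>"
    "p \<noteq> q \<Longrightarrow> norm (u p \<sigma> - u q \<sigma>) \<le> U \<sigma> * Cm_modulus m (dist p q)"
    if "\<sigma> \<in> {a..b}" for p q \<sigma>
    using Cm_norm_bounds[OF u_Cm[OF ab(3)[OF that]]] by (simp_all add: U_def)
  have "X x t \<noteq> X y t \<and> \<bar>Cm_osgood m (dist (X x t) (X y t)) - Cm_osgood m (dist (X x s) (X y s))\<bar>
      \<le> \<bar>integral {a..t} U - integral {a..s} U\<bar>"
    using u_bounds ab xy X_s
    by (intro integral_curves_osgood_estimate[OF Cm_osgood_blowup[OF osg] U_int' _ _
          X_int[where z = x] X_eq[where z = x] X_int[where z = y] X_eq[where z = y]]) auto
  moreover have "(LBINT \<tau>=s..t. U \<tau>) = integral {a..t} U - integral {a..s} U"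
    by (rule interval_lebesgue_integral_eq_integral_diff[OF U_int U_int' ab(1,2)])
  ultimately show ?thesis
    by (auto simp: X_def X_s[unfolded X_def] U_def)
qed

end

theorem lemma4p7:
  fixes m :: "real \<Rightarrow> real" and n :: nat
    and u :: "pt \<Rightarrow> real \<Rightarrow> pt" and \<Phi> :: "real \<Rightarrow> real \<Rightarrow> pt \<Rightarrow> pt"
  assumes n: "n \<ge> 1"
    and h1: "H1 n m" and h2a: "H2a m" and osg: "Osg m"
    and u_Cm: "\<And>t. t \<ge> 0 \<Longrightarrow> Cm_space m (\<lambda>x. u x t)"
    and u_L1: "set_integrable lborel {0..} (\<lambda>t. Cm_norm m (\<lambda>x. u x t))"
    and flow_int: "\<And>t s x. t \<ge> 0 \<Longrightarrow> s \<ge> 0 \<Longrightarrow>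
        interval_lebesgue_integrable lborel (ereal s) (ereal t) (\<lambda>\<tau>. u (\<Phi> \<tau> s x) \<tau>)"
    and flow: "\<And>t s x. t \<ge> 0 \<Longrightarrow> s \<ge> 0 \<Longrightarrow>
        \<Phi> t s x = x + (LBINT \<tau>=s..t. u (\<Phi> \<tau> s x) \<tau>)"
    and ts: "t \<ge> 0" "s \<ge> 0" and xy: "x \<noteq> y"
  shows "inverse (dist (\<Phi> t s x) (\<Phi> t s y)) \<ge>
           Ht_inv m (Ht m (inverse (dist x y)) - \<bar>LBINT \<tau>=s..t. Cm_norm m (\<lambda>z. u z \<tau>)\<bar>) \<and>
         dist (\<Phi> t s x) (\<Phi> t s y) \<le>
           dist x y * exp ((m (inverse (dist x y)) + 1) * \<bar>LBINT \<tau>=s..t. Cm_norm m (\<lambda>z. u z \<tau>)\<bar>)"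
proof -
  interpret Cm_symbol m
    using h1 by (rule H1_imp_Cm_symbol)
  have "\<Phi> t s x \<noteq> \<Phi> t s y"
    and "Cm_osgood m (dist x y) - Cm_osgood m (dist (\<Phi> t s x) (\<Phi> t s y))
      \<le> \<bar>LBINT \<tau>=s..t. Cm_norm m (\<lambda>z. u z \<tau>)\<bar>"
    using flow_Cm_osgood_estimate[where u = u and \<Phi> = \<Phi>,
        OF osg u_Cm u_L1 flow_int[OF _ ts(2)] flow[OF _ ts(2)] ts xy]
    by auto
  then show ?thesis
    using xy Ht_inv_le Cm_osgood_le_exp by (simp add: Ht_eq_Cm_osgood)
qed

end
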